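(* Let $\alpha\in(0,1)$. For any distribution functions $F,G$ on $\mathbb R$, $$|\mathrm{VaR}_\alpha(F)-\mathrm{VaR}_\alpha(G)|\le\frac{2\|F\|+\|F-G\|}{\min\{\alpha,1-\alpha\}},$$ where $\|F\|=\max\{\|F\|_\infty,|\int_{-\infty}^0x\,dF(x)|,|\int_0^\infty x\,dF(x)|\}$.
   Context: $\|F\|_\infty=\sup_x|F(x)|$; integrals are Lebesgue–Stieltjes integrals (the norm may be $+\infty$, in which case the inequality is trivial). $\mathrm{VaR}_\alpha(F)=\inf\{y\in\mathbb R:F(y)\ge\alpha\}$. *)

theory Defs
  imports "HOL-Analysis.Analysis"
begin

definition is_distribution_function :: "(real \<Rightarrow> real) \<Rightarrow> bool" where
  "is_distribution_function F \<longleftrightarrow> mono F \<and> (\<forall>x. continuous (at_right x) F) \<and>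
     (F \<longlongrightarrow> 0) at_bot \<and> (F \<longlongrightarrow> 1) at_top"

definition VaR :: "real \<Rightarrow> (real \<Rightarrow> real) \<Rightarrow> real" where
  "VaR \<alpha> F = Inf {y. F y \<ge> \<alpha>}"

definition ls_moment :: "(real \<Rightarrow> real) \<Rightarrow> real set \<Rightarrow> real" where
  "ls_moment F S = (LINT x:S | interval_measure F. x)"

definition abs_moment :: "(real \<Rightarrow> real) \<Rightarrow> real set \<Rightarrow> ereal" where
  "abs_moment F S = (if set_integrable (interval_measure F) S (\<lambda>x. x)
      then ereal \<bar>ls_moment F S\<bar> else \<infinity>)"

definition abs_moment_diff :: "(real \<Rightarrow> real) \<Rightarrow> (real \<Rightarrow> real) \<Rightarrow> real set \<Rightarrow> ereal" where
  "abs_moment_diff F G S = (if set_integrable (interval_measure F) S (\<lambda>x. x)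
        \<and> set_integrable (interval_measure G) S (\<lambda>x. x)
      then ereal \<bar>ls_moment F S - ls_moment G S\<bar> else \<infinity>)"

definition dnorm :: "(real \<Rightarrow> real) \<Rightarrow> ereal" where
  "dnorm F = max (SUP x. ereal \<bar>F x\<bar>) (max (abs_moment F {..0}) (abs_moment F {0..}))"

definition dnorm_diff :: "(real \<Rightarrow> real) \<Rightarrow> (real \<Rightarrow> real) \<Rightarrow> ereal" where
  "dnorm_diff F G = max (SUP x. ereal \<bar>F x - G x\<bar>)
      (max (abs_moment_diff F G {..0}) (abs_moment_diff F G {0..}))"

end

theory Submission
  imports Defs "HOL-Probability.Probability"
begin

text \<open>
  The quantile of a distribution function is controlled by its tail moments: if
  \<open>q = VaR\<^sub>\<alpha>(F) > 0\<close>, then \<open>F y < \<alpha>\<close> for \<open>y < q\<close>, so Markov's inequality gives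
  \<open>y (1 - \<alpha>) \<le> y P(X > y) \<le> E[X; X \<ge> 0]\<close>, and letting \<open>y \<rightarrow> q\<close> yields
  \<open>q (1 - \<alpha>) \<le> E[X; X \<ge> 0]\<close>; symmetrically, if \<open>q < 0\<close> then
  \<open>E[X; X \<le> 0] \<le> q P(X \<le> q) = q F(q) \<le> q \<alpha>\<close>. Hence \<open>|VaR\<^sub>\<alpha>(F)| min(\<alpha>, 1 - \<alpha>) \<le> \<parallel>F\<parallel>\<close>,
  and the theorem follows from \<open>|VaR\<^sub>\<alpha>(F) - VaR\<^sub>\<alpha>(G)| \<le> |VaR\<^sub>\<alpha>(F)| + |VaR\<^sub>\<alpha>(G)|\<close>
  together with \<open>\<parallel>G\<parallel> \<le> \<parallel>F\<parallel> + \<parallel>F - G\<parallel>\<close>.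
\<close>

lemma is_distribution_functionD:
  assumes "is_distribution_function F"
  shows "\<And>x y. x \<le> y \<Longrightarrow> F x \<le> F y" and "\<And>x. continuous (at_right x) F"
    and "(F \<longlongrightarrow> 0) at_bot" and "(F \<longlongrightarrow> 1) at_top"
  using assms by (auto simp: is_distribution_function_def mono_def)

lemma distribution_function_superlevel_set:
  assumes F: "is_distribution_function F" and "0 < \<alpha>" "\<alpha> < 1"
  shows "{y. \<alpha> \<le> F y} \<noteq> {}" and "bdd_below {y. \<alpha> \<le> F y}"
proof -
  have "eventually (\<lambda>x. \<alpha> < F x) at_top"
    using order_tendstoD(1)[OF is_distribution_functionD(4)[OF F]] \<open>\<alpha> < 1\<close> by simp
  then obtain x0 where "\<alpha> < F x0"
    by (auto simp: eventually_at_top_linorder)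
  then show "{y. \<alpha> \<le> F y} \<noteq> {}"
    by (auto intro: less_imp_le)
  have "eventually (\<lambda>x. F x < \<alpha>) at_bot"
    using order_tendstoD(2)[OF is_distribution_functionD(3)[OF F]] \<open>0 < \<alpha>\<close> by simp
  then obtain b where "\<And>x. x \<le> b \<Longrightarrow> F x < \<alpha>"
    by (auto simp: eventually_at_bot_linorder)
  then show "bdd_below {y. \<alpha> \<le> F y}"
    unfolding bdd_below_def by (metis mem_Collect_eq not_le order.asym)
qed

lemma VaR_le_iff:
  assumes F: "is_distribution_function F" and "0 < \<alpha>" "\<alpha> < 1"
  shows "VaR \<alpha> F \<le> y \<longleftrightarrow> \<alpha> \<le> F y"
proof
  note level_set = distribution_function_superlevel_set[OF assms]
  assume "VaR \<alpha> F \<le> y"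
  have eventually_ge: "eventually (\<lambda>x. \<alpha> \<le> F x) (at_right y)"
    unfolding eventually_at_right_field
  proof (intro exI[of _ "y + 1"] conjI allI impI)
    fix x assume "y < x"
    with \<open>VaR \<alpha> F \<le> y\<close> have "Inf {y. \<alpha> \<le> F y} < x"
      by (simp add: VaR_def)
    then obtain s where "\<alpha> \<le> F s" "s < x"
      using cInf_less_iff[OF level_set] by blast
    then show "\<alpha> \<le> F x"
      using is_distribution_functionD(1)[OF F, of s x] by simp
  qed simp
  have "(F \<longlongrightarrow> F y) (at_right y)"
    using is_distribution_functionD(2)[OF F] by (simp add: continuous_within)
  then show "\<alpha> \<le> F y"
    using eventually_ge by (rule tendsto_lowerbound) simp
next
  assume "\<alpha> \<le> F y"
  then show "VaR \<alpha> F \<le> y"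
    unfolding VaR_def by (intro cInf_lower distribution_function_superlevel_set(2)[OF assms]) simp
qed

lemma mult_measure_greaterThan_le_set_integral:
  fixes M :: "real measure" and y :: real
  assumes "finite_measure M" and "sets M = sets borel" and "set_integrable M {0..} (\<lambda>x. x)" and "0 \<le> y"
  shows "y * measure M {y<..} \<le> (LINT x:{0..}|M. x)"
proof -
  have "y * measure M {y<..} = (LINT x|M. y * indicator {y<..} x)"
    using assms(2) by (simp add: finite_measure.emeasure_eq_measure[OF assms(1)])
  also have "\<dots> \<le> (LINT x|M. indicator {0..} x * x)"
    using assms by (intro integral_mono integrable_mult_right integrable_real_indicator)
      (auto simp: set_integrable_def indicator_def finite_measure.emeasure_eq_measure[OF assms(1)])
  finally show ?thesis
    by (simp add: set_lebesgue_integral_def)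
qed

lemma set_integral_atMost_le_mult_measure:
  fixes M :: "real measure" and y :: real
  assumes "finite_measure M" and "sets M = sets borel" and "set_integrable M {..0} (\<lambda>x. x)" and "y \<le> 0"
  shows "(LINT x:{..0}|M. x) \<le> y * measure M {..y}"
proof -
  have "(LINT x:{..0}|M. x) = (LINT x|M. indicator {..0} x * x)"
    by (simp add: set_lebesgue_integral_def)
  also have "\<dots> \<le> (LINT x|M. y * indicator {..y} x)"
    using assms by (intro integral_mono integrable_mult_right integrable_real_indicator)
      (auto simp: set_integrable_def indicator_def finite_measure.emeasure_eq_measure[OF assms(1)])
  also have "\<dots> = y * measure M {..y}"
    using assms(2) by (simp add: finite_measure.emeasure_eq_measure[OF assms(1)])
  finally show ?thesis .
qed

lemma real_distribution_interval_measure_of_distribution_function: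
  assumes "is_distribution_function F"
  shows "real_distribution (interval_measure F)"
  using real_distribution_interval_measure is_distribution_functionD[OF assms] by blast

lemma measure_interval_measure_atMost:
  assumes "is_distribution_function F"
  shows "measure (interval_measure F) {..x} = F x"
  using measure_interval_measure_Iic is_distribution_functionD[OF assms] by blast

lemma measure_interval_measure_greaterThan:
  assumes "is_distribution_function F"
  shows "measure (interval_measure F) {x<..} = 1 - F x"
proof -
  interpret real_distribution "interval_measure F"
    using assms by (rule real_distribution_interval_measure_of_distribution_function)
  have "{x<..} = space (interval_measure F) - {..x}"
    by auto
  then show ?thesis
    using prob_compl[of "{..x}"] by (simp add: measure_interval_measure_atMost[OF assms])
qed

lemma mult_VaR_le_upper_tail_moment:
  assumes F: "is_distribution_function F" and "0 < \<alpha>" "\<alpha> < 1" and "0 < VaR \<alpha> F"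
    and "set_integrable (interval_measure F) {0..} (\<lambda>x. x)"
  shows "(1 - \<alpha>) * VaR \<alpha> F \<le> ls_moment F {0..}"
proof -
  interpret real_distribution "interval_measure F"
    using F by (rule real_distribution_interval_measure_of_distribution_function)
  have "VaR \<alpha> F \<le> ls_moment F {0..} / (1 - \<alpha>)"
  proof (rule dense_le_bounded[OF \<open>0 < VaR \<alpha> F\<close>])
    fix y assume "0 < y" "y < VaR \<alpha> F"
    then have "F y < \<alpha>"
      using VaR_le_iff[OF F \<open>0 < \<alpha>\<close> \<open>\<alpha> < 1\<close>, of y] by simp
    with \<open>0 < y\<close> have "y * (1 - \<alpha>) \<le> y * measure (interval_measure F) {y<..}"
      by (simp add: measure_interval_measure_greaterThan[OF F])
    also have "\<dots> \<le> ls_moment F {0..}"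
      unfolding ls_moment_def using assms \<open>0 < y\<close>
      by (intro mult_measure_greaterThan_le_set_integral finite_measure_axioms) simp_all
    finally show "y \<le> ls_moment F {0..} / (1 - \<alpha>)"
      using \<open>\<alpha> < 1\<close> by (simp add: field_simps)
  qed
  then show ?thesis
    using \<open>\<alpha> < 1\<close> by (simp add: field_simps)
qed

lemma lower_tail_moment_le_mult_VaR:
  assumes F: "is_distribution_function F" and "0 < \<alpha>" "\<alpha> < 1" and "VaR \<alpha> F < 0"
    and "set_integrable (interval_measure F) {..0} (\<lambda>x. x)"
  shows "ls_moment F {..0} \<le> \<alpha> * VaR \<alpha> F"
proof -
  interpret real_distribution "interval_measure F"
    using F by (rule real_distribution_interval_measure_of_distribution_function)
  have "ls_moment F {..0} \<le> VaR \<alpha> F * measure (interval_measure F) {..VaR \<alpha> F}"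
    unfolding ls_moment_def using assms
    by (intro set_integral_atMost_le_mult_measure finite_measure_axioms) simp_all
  also have "\<dots> = VaR \<alpha> F * F (VaR \<alpha> F)"
    by (simp add: measure_interval_measure_atMost[OF F])
  also have "\<dots> \<le> VaR \<alpha> F * \<alpha>"
    using \<open>VaR \<alpha> F < 0\<close> VaR_le_iff[OF F \<open>0 < \<alpha>\<close> \<open>\<alpha> < 1\<close>, of "VaR \<alpha> F"]
    by (simp add: mult_left_mono_neg)
  finally show ?thesis
    by (simp add: mult.commute)
qed

definition has_tail_moments :: "(real \<Rightarrow> real) \<Rightarrow> bool" where
  "has_tail_moments F \<longleftrightarrow> set_integrable (interval_measure F) {..0} (\<lambda>x. x)
     \<and> set_integrable (interval_measure F) {0..} (\<lambda>x. x)"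

definition tail_moment_norm :: "(real \<Rightarrow> real) \<Rightarrow> real" where
  "tail_moment_norm F = max \<bar>ls_moment F {..0}\<bar> \<bar>ls_moment F {0..}\<bar>"

lemma min_mult_abs_VaR_le_tail_moment_norm:
  assumes F: "is_distribution_function F" and "0 < \<alpha>" "\<alpha> < 1" and "has_tail_moments F"
  shows "min \<alpha> (1 - \<alpha>) * \<bar>VaR \<alpha> F\<bar> \<le> tail_moment_norm F"
proof -
  consider "0 < VaR \<alpha> F" | "VaR \<alpha> F = 0" | "VaR \<alpha> F < 0"
    by linarith
  then show ?thesis
  proof cases
    case 1
    have "(1 - \<alpha>) * VaR \<alpha> F \<le> ls_moment F {0..}"
      using mult_VaR_le_upper_tail_moment[OF F \<open>0 < \<alpha>\<close> \<open>\<alpha> < 1\<close> 1] \<open>has_tail_moments F\<close>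
      by (simp add: has_tail_moments_def)
    then have "(1 - \<alpha>) * \<bar>VaR \<alpha> F\<bar> \<le> \<bar>ls_moment F {0..}\<bar>"
      using 1 abs_ge_self[of "ls_moment F {0..}"] by simp
    moreover have "min \<alpha> (1 - \<alpha>) * \<bar>VaR \<alpha> F\<bar> \<le> (1 - \<alpha>) * \<bar>VaR \<alpha> F\<bar>"
      by (intro mult_right_mono) simp_all
    ultimately show ?thesis
      unfolding tail_moment_norm_def by linarith
  next
    case 2
    then show ?thesis
      unfolding tail_moment_norm_def by simp
  next
    case 3
    have "ls_moment F {..0} \<le> \<alpha> * VaR \<alpha> F"
      using lower_tail_moment_le_mult_VaR[OF F \<open>0 < \<alpha>\<close> \<open>\<alpha> < 1\<close> 3] \<open>has_tail_moments F\<close>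
      by (simp add: has_tail_moments_def)
    then have "\<alpha> * \<bar>VaR \<alpha> F\<bar> \<le> \<bar>ls_moment F {..0}\<bar>"
      using 3 abs_ge_minus_self[of "ls_moment F {..0}"] by simp
    moreover have "min \<alpha> (1 - \<alpha>) * \<bar>VaR \<alpha> F\<bar> \<le> \<alpha> * \<bar>VaR \<alpha> F\<bar>"
      by (intro mult_right_mono) simp_all
    ultimately show ?thesis
      unfolding tail_moment_norm_def by linarith
  qed
qed

lemma dnorm_nonneg: "0 \<le> dnorm F"
proof -
  have "0 \<le> ereal \<bar>F 0\<bar>"
    by simp
  also have "\<dots> \<le> (SUP x. ereal \<bar>F x\<bar>)"
    by (rule SUP_upper) simp
  finally show ?thesis
    unfolding dnorm_def by (simp add: le_max_iff_disj)
qed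

lemma tail_moment_norm_le_dnorm:
  assumes "has_tail_moments F"
  shows "ereal (tail_moment_norm F) \<le> dnorm F"
  using assms by (simp add: has_tail_moments_def tail_moment_norm_def dnorm_def abs_moment_def le_max_iff_disj)

lemma tail_moment_norm_le_add_dnorm_diff:
  assumes "has_tail_moments F" and "has_tail_moments G"
  shows "ereal (tail_moment_norm G) \<le> ereal (tail_moment_norm F) + dnorm_diff F G"
proof -
  let ?diff = "max \<bar>ls_moment F {..0} - ls_moment G {..0}\<bar> \<bar>ls_moment F {0..} - ls_moment G {0..}\<bar>"
  have "tail_moment_norm G \<le> tail_moment_norm F + ?diff"
    unfolding tail_moment_norm_def by linarith
  moreover have "ereal ?diff \<le> dnorm_diff F G"
    using assms by (simp add: has_tail_moments_def dnorm_diff_def abs_moment_diff_def le_max_iff_disj)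
  ultimately show ?thesis
    by (metis add_mono ereal_less_eq(3) order.trans order.refl plus_ereal.simps(1))
qed

lemma dnorm_diff_eq_infinity:
  assumes "\<not> (has_tail_moments F \<and> has_tail_moments G)"
  shows "dnorm_diff F G = \<infinity>"
  using assms by (auto simp: has_tail_moments_def dnorm_diff_def abs_moment_diff_def max_def)

lemma min_mult_abs_VaR_diff_le:
  assumes "0 < \<alpha>" "\<alpha> < 1"
    and "is_distribution_function F" "is_distribution_function G"
  shows "ereal (min \<alpha> (1 - \<alpha>) * \<bar>VaR \<alpha> F - VaR \<alpha> G\<bar>) \<le> 2 * dnorm F + dnorm_diff F G"
proof (cases "has_tail_moments F \<and> has_tail_moments G")
  case True
  let ?m = "min \<alpha> (1 - \<alpha>)"
  have "?m * \<bar>VaR \<alpha> F - VaR \<alpha> G\<bar> \<le> ?m * \<bar>VaR \<alpha> F\<bar> + ?m * \<bar>VaR \<alpha> G\<bar>"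
    using mult_left_mono[OF abs_triangle_ineq4, of ?m] assms(1,2) by (simp add: distrib_left)
  also have "\<dots> \<le> tail_moment_norm F + tail_moment_norm G"
    using True by (intro add_mono min_mult_abs_VaR_le_tail_moment_norm assms) simp_all
  finally have "ereal (?m * \<bar>VaR \<alpha> F - VaR \<alpha> G\<bar>) \<le> ereal (tail_moment_norm F) + ereal (tail_moment_norm G)"
    by simp
  also have "\<dots> \<le> ereal (tail_moment_norm F) + (ereal (tail_moment_norm F) + dnorm_diff F G)"
    using True by (intro add_left_mono tail_moment_norm_le_add_dnorm_diff) simp_all
  also have "\<dots> \<le> dnorm F + (dnorm F + dnorm_diff F G)"
    using True by (intro add_mono tail_moment_norm_le_dnorm order.refl) simp_all
  also have "\<dots> = 2 * dnorm F + dnorm_diff F G"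
    by (simp add: mult_2_ereal add.assoc)
  finally show ?thesis .
next
  case False
  then show ?thesis
    by (simp add: dnorm_diff_eq_infinity dnorm_nonneg)
qed

theorem lemma30:
  fixes \<alpha> :: real and F G :: "real \<Rightarrow> real"
  assumes "0 < \<alpha>" "\<alpha> < 1"
    and "is_distribution_function F" "is_distribution_function G"
  shows "ereal \<bar>VaR \<alpha> F - VaR \<alpha> G\<bar>
           \<le> (2 * dnorm F + dnorm_diff F G) / ereal (min \<alpha> (1 - \<alpha>))"
proof -
  have "0 < min \<alpha> (1 - \<alpha>)"
    using assms(1,2) by simp
  with min_mult_abs_VaR_diff_le[OF assms] show ?thesis
    by (subst ereal_le_divide_pos) (simp_all del: ereal_min)
qed

end
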